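(* Let $X$ be a normal $k$-space which contains a closed subspace homeomorphic to $K$ and a closed subspace homeomorphic to $V$. Then: (a) $X$ is not homeomorphic to any closed multiplicative subset of a topological group; (b) $X$ is not homeomorphic to any closed convex subset of a (real) linear topological space.
   Context: $K=\{(0,0)\}\cup\{(\tfrac1n,\tfrac1{nm}) : n,m\in\mathbb N\}\subset\mathbb R^2$ with the subspace topology. Let $S_0=\{0\}\cup\{\tfrac1n:n\in\mathbb N\}\subset\mathbb R$ and let $V$ (the Fréchet–Urysohn fan) be the quotient space $(\mathbb N\times S_0)/(\mathbb N\times\{0\})$, where $\mathbb N$ is discrete, i.e. $\mathbb N\times S_0$ with the subset $\mathbb N\times\{0\}$ collapsed to a single point. A subset $A$ of a topological group $G$ is multiplicative if $a\ast b\in A$ for all $a,b\in A$, where $\ast$ is the group operation. A $k$-space is a space in which a set is closed iff its intersection with every compact subset $C$ is closed in $C$. *)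

theory Defs
  imports "HOL-Analysis.Analysis" "HOL-Algebra.Group"
begin

definition K_set :: "(real \<times> real) set" where
  "K_set = {(0,0)} \<union> {(1 / real n, 1 / (real n * real m)) | n m. n \<ge> 1 \<and> m \<ge> 1}"

definition K_space :: "(real \<times> real) topology" where
  "K_space = subtopology euclidean K_set"

definition S0 :: "real set" where
  "S0 = {0} \<union> {1 / real n | n. n \<ge> 1}"

definition quotient_topology :: "'a topology \<Rightarrow> ('a \<Rightarrow> 'b) \<Rightarrow> 'b topology" where
  "quotient_topology P f =
     topology (\<lambda>U. U \<subseteq> f ` topspace P \<and> openin P {x \<in> topspace P. f x \<in> U})"


lemma istopology_quotient_topology:
  "istopology (\<lambda>U. U \<subseteq> f ` topspace P \<and> openin P {x \<in> topspace P. f x \<in> U})"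
proof -
  have i: "{x \<in> topspace P. f x \<in> S \<inter> T} = {x \<in> topspace P. f x \<in> S} \<inter> {x \<in> topspace P. f x \<in> T}" for S T by blast
  have u: "{x \<in> topspace P. f x \<in> \<Union>K} = \<Union>((\<lambda>U. {x \<in> topspace P. f x \<in> U}) ` K)" for K by blast
  have a: "S \<inter> T \<subseteq> f ` topspace P \<and> openin P {x \<in> topspace P. f x \<in> S \<inter> T}"
    if "S \<subseteq> f ` topspace P \<and> openin P {x \<in> topspace P. f x \<in> S}"
      "T \<subseteq> f ` topspace P \<and> openin P {x \<in> topspace P. f x \<in> T}" for S T
    using that by (auto simp only: i intro: openin_Int)
  have b: "\<Union>K \<subseteq> f ` topspace P \<and> openin P {x \<in> topspace P. f x \<in> \<Union>K}"
    if "\<forall>U\<in>K. U \<subseteq> f ` topspace P \<and> openin P {x \<in> topspace P. f x \<in> U}" for K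
    using that unfolding u by (auto intro!: openin_Union)
  show ?thesis unfolding istopology_def using a b by blast
qed

lemma openin_quotient_topology:
  "openin (quotient_topology P f) U \<longleftrightarrow> U \<subseteq> f ` topspace P \<and> openin P {x \<in> topspace P. f x \<in> U}"
  unfolding quotient_topology_def using istopology_quotient_topology[of f P]
  by (simp add: topology_inverse')

definition fan_base :: "(nat \<times> real) topology" where
  "fan_base = prod_topology (discrete_topology {n. n \<ge> 1}) (subtopology euclideanreal S0)"

text \<open>Collapsing map: all points (n,0) go to the single point (0,0); others are fixed
  (note (0,0) is not in N x S0 since N starts at 1).\<close>
definition fan_collapse :: "nat \<times> real \<Rightarrow> nat \<times> real" where
  "fan_collapse p = (if snd p = 0 then (0, 0) else p)"

definition fan_V :: "(nat \<times> real) topology" where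
  "fan_V = quotient_topology fan_base fan_collapse"

definition topological_group :: "('g, 'm) monoid_scheme \<Rightarrow> 'g topology \<Rightarrow> bool" where
  "topological_group G T \<longleftrightarrow>
     group G \<and> topspace T = carrier G \<and>
     continuous_map (prod_topology T T) T (\<lambda>p. fst p \<otimes>\<^bsub>G\<^esub> snd p) \<and>
     continuous_map T T (\<lambda>x. inv\<^bsub>G\<^esub> x)"

definition multiplicative :: "('g, 'm) monoid_scheme \<Rightarrow> 'g set \<Rightarrow> bool" where
  "multiplicative G A \<longleftrightarrow> A \<subseteq> carrier G \<and> (\<forall>a\<in>A. \<forall>b\<in>A. a \<otimes>\<^bsub>G\<^esub> b \<in> A)"

definition linear_topological_space :: "'v::real_vector topology \<Rightarrow> bool" where
  "linear_topological_space T \<longleftrightarrow>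
     topspace T = UNIV \<and>
     continuous_map (prod_topology T T) T (\<lambda>p. fst p + snd p) \<and>
     continuous_map (prod_topology euclideanreal T) T (\<lambda>p. fst p *\<^sub>R snd p)"

end

theory Submission
  imports Defs
begin

(* Let A be a closed subset of a space T carrying a continuous operation mu under
   which A is closed and which can be undone on A by continuous "division" maps L and R
   (L (mu x y, y) = x and R (x, mu x y) = y).  Closed multiplicative subsets of topological
   groups (mu = multiplication) and closed convex subsets of linear topological spaces
   (mu = midpoint) are of this kind.  Suppose A is a T1 k-space containing closed copies of K
   (apex a, points k n m) and of the fan V (vertex b, points v n m).  Using L and R together with
   the compact-set behaviour of K and V one shows that every compact set contains only finitely
   many of the products p n m = mu (k n m) (v n m).  In a T1 k-space this makes
   {p n m} - {mu a b} closed; but continuity of mu at (a, b) forces infinitely many p n m in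
   every neighbourhood of mu a b, hence infinitely many equal to mu a b -- a contradiction. *)

section \<open>General topology\<close>

lemma compactin_insert_limit:
  assumes a: "a \<in> topspace T" and F: "F \<subseteq> topspace T"
    and fin: "\<And>W. openin T W \<Longrightarrow> a \<in> W \<Longrightarrow> finite (F - W)"
  shows "compactin T (insert a F)"
  unfolding compactin_def
proof (intro conjI allI impI)
  show "insert a F \<subseteq> topspace T" using a F by auto
  fix \<U> assume \<U>: "Ball \<U> (openin T) \<and> insert a F \<subseteq> \<Union> \<U>"
  then obtain W where W: "W \<in> \<U>" "a \<in> W" by auto
  have "\<forall>x\<in>F - W. \<exists>V\<in>\<U>. x \<in> V" using \<U> by auto
  then obtain g where g: "\<forall>x\<in>F - W. g x \<in> \<U> \<and> x \<in> g x" by metis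
  show "\<exists>\<F>. finite \<F> \<and> \<F> \<subseteq> \<U> \<and> insert a F \<subseteq> \<Union> \<F>"
    by (rule exI[of _ "insert W (g ` (F - W))"]) (use fin[of W] \<U> W g in auto)
qed

lemma finite_compactin_isolated:
  assumes "compactin X S" and "\<And>x. x \<in> S \<Longrightarrow> openin X {x}"
  shows "finite S"
proof -
  have "Ball ((\<lambda>x. {x}) ` S) (openin X) \<and> S \<subseteq> \<Union> ((\<lambda>x. {x}) ` S)" using assms(2) by auto
  then obtain \<F> where "finite \<F>" "\<F> \<subseteq> (\<lambda>x. {x}) ` S" "S \<subseteq> \<Union>\<F>"
    using assms(1) unfolding compactin_def by metis
  then have "finite (\<Union>\<F>)" by (auto intro: finite_subset)
  then show ?thesis using \<open>S \<subseteq> \<Union>\<F>\<close> finite_subset by blast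
qed

lemma closedin_if_finite_on_compacts:
  assumes k: "k_space Y" and t1: "t1_space Y" and D: "D \<subseteq> topspace Y"
    and fin: "\<And>C. compactin Y C \<Longrightarrow> finite (C \<inter> D)"
  shows "closedin Y D"
proof (rule k[unfolded k_space, rule_format], intro conjI allI impI)
  show "D \<subseteq> topspace Y" by (rule D)
  fix C assume C: "compactin Y C"
  have "t1_space (subtopology Y C)" using t1 t1_space_subtopology by blast
  moreover have "C \<inter> D \<subseteq> topspace (subtopology Y C)" using compactin_subset_topspace[OF C] by auto
  ultimately show "closedin (subtopology Y C) (C \<inter> D)"
    using fin[OF C] t1_space_closedin_finite by blast
qed

lemma proper_map_closed_inclusion:
  "closedin Y S \<Longrightarrow> proper_map (subtopology Y S) Y id"
  by (simp add: proper_map_inclusion closedin_subset closed_Int_compactin)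

lemma closed_subspace_proper_embedding:
  assumes clA: "closedin T A" and hX: "X homeomorphic_space subtopology T A"
    and clC: "closedin X C" and hC: "subtopology X C homeomorphic_space Z"
  obtains e where "proper_map Z T e" "continuous_map Z T e" "e ` topspace Z \<subseteq> A"
proof -
  obtain f where f: "homeomorphic_map X (subtopology T A) f"
    using hX homeomorphic_space by blast
  obtain h where h: "homeomorphic_map Z (subtopology X C) h"
    using hC homeomorphic_space homeomorphic_space_sym by blast
  have "proper_map X T (id \<circ> f)"
    using proper_map_compose[OF homeomorphic_imp_proper_map[OF f] proper_map_closed_inclusion[OF clA]] .
  moreover have "proper_map Z X (id \<circ> h)"
    using proper_map_compose[OF homeomorphic_imp_proper_map[OF h] proper_map_closed_inclusion[OF clC]] .
  ultimately have "proper_map Z T (f \<circ> h)"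
    using proper_map_compose by fastforce
  moreover have "continuous_map Z T (f \<circ> h)"
    using homeomorphic_imp_continuous_map[OF h] homeomorphic_imp_continuous_map[OF f]
    by (meson continuous_map_compose continuous_map_from_subtopology continuous_map_in_subtopology)
  moreover have "(f \<circ> h) ` topspace Z \<subseteq> A"
    using homeomorphic_imp_continuous_map[OF f] homeomorphic_imp_continuous_map[OF h]
    by (fastforce simp: continuous_map_in_subtopology continuous_map_def)
  ultimately show ?thesis using that by blast
qed

lemma compact_positive_bounded_below:
  fixes Y :: "real set"
  assumes "compact Y" and "\<And>y. y \<in> Y \<Longrightarrow> y > 0"
  obtains \<delta> where "\<delta> > 0" "\<And>y. y \<in> Y \<Longrightarrow> \<delta> \<le> y"
proof (cases "Y = {}")
  case False
  then obtain y0 where "y0 \<in> Y" "\<forall>y\<in>Y. y0 \<le> y" using compact_attains_inf[OF assms(1)] by blast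
  then show ?thesis using that assms(2) by blast
qed (use that[of 1] in simp)

section \<open>The combinatorial shapes of K and of the fan\<close>

text \<open>The features of K that the argument uses: the columns k n _ converge uniformly to the apex a
  as n grows, while each single column meets every compact set in finitely many points.\<close>
definition K_config :: "'a topology \<Rightarrow> 'a \<Rightarrow> (nat \<Rightarrow> nat \<Rightarrow> 'a) \<Rightarrow> bool" where
  "K_config T a k \<longleftrightarrow> a \<in> topspace T \<and> (\<forall>n\<ge>1. \<forall>m\<ge>1. k n m \<in> topspace T) \<and>
     (\<forall>W. openin T W \<and> a \<in> W \<longrightarrow> (\<exists>N. \<forall>n\<ge>N. \<forall>m\<ge>1. k n m \<in> W)) \<and>
     (\<forall>n\<ge>1. \<forall>C. compactin T C \<longrightarrow> finite {m. m \<ge> 1 \<and> k n m \<in> C})"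

text \<open>The features of the fan that the argument uses: every spine v n _ converges to the vertex b,
  while a compact set meets only finitely many spines.\<close>
definition fan_config :: "'a topology \<Rightarrow> 'a \<Rightarrow> (nat \<Rightarrow> nat \<Rightarrow> 'a) \<Rightarrow> bool" where
  "fan_config T b v \<longleftrightarrow> b \<in> topspace T \<and> (\<forall>n\<ge>1. \<forall>m\<ge>1. v n m \<in> topspace T) \<and>
     (\<forall>W n. openin T W \<and> b \<in> W \<and> n \<ge> 1 \<longrightarrow> (\<exists>M. \<forall>m\<ge>M. v n m \<in> W)) \<and>
     (\<forall>C. compactin T C \<longrightarrow> finite {n. n \<ge> 1 \<and> (\<exists>m\<ge>1. v n m \<in> C)})"

lemma K_configI:
  assumes "a \<in> topspace T" "\<And>n m. n \<ge> 1 \<Longrightarrow> m \<ge> 1 \<Longrightarrow> k n m \<in> topspace T"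
    "\<And>W. openin T W \<Longrightarrow> a \<in> W \<Longrightarrow> \<exists>N. \<forall>n\<ge>N. \<forall>m\<ge>1. k n m \<in> W"
    "\<And>n C. n \<ge> 1 \<Longrightarrow> compactin T C \<Longrightarrow> finite {m. m \<ge> 1 \<and> k n m \<in> C}"
  shows "K_config T a k"
  using assms unfolding K_config_def by blast

lemma K_configD:
  assumes "K_config T a k"
  shows "a \<in> topspace T" "\<And>n m. n \<ge> 1 \<Longrightarrow> m \<ge> 1 \<Longrightarrow> k n m \<in> topspace T"
    "\<And>W. openin T W \<Longrightarrow> a \<in> W \<Longrightarrow> \<exists>N. \<forall>n\<ge>N. \<forall>m\<ge>1. k n m \<in> W"
    "\<And>n C. n \<ge> 1 \<Longrightarrow> compactin T C \<Longrightarrow> finite {m. m \<ge> 1 \<and> k n m \<in> C}"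
  using assms unfolding K_config_def by blast+

lemma fan_configI:
  assumes "b \<in> topspace T" "\<And>n m. n \<ge> 1 \<Longrightarrow> m \<ge> 1 \<Longrightarrow> v n m \<in> topspace T"
    "\<And>W n. openin T W \<Longrightarrow> b \<in> W \<Longrightarrow> n \<ge> 1 \<Longrightarrow> \<exists>M. \<forall>m\<ge>M. v n m \<in> W"
    "\<And>C. compactin T C \<Longrightarrow> finite {n. n \<ge> 1 \<and> (\<exists>m\<ge>1. v n m \<in> C)}"
  shows "fan_config T b v"
  using assms unfolding fan_config_def by blast

lemma fan_configD:
  assumes "fan_config T b v"
  shows "b \<in> topspace T" "\<And>n m. n \<ge> 1 \<Longrightarrow> m \<ge> 1 \<Longrightarrow> v n m \<in> topspace T"
    "\<And>W n. openin T W \<Longrightarrow> b \<in> W \<Longrightarrow> n \<ge> 1 \<Longrightarrow> \<exists>M. \<forall>m\<ge>M. v n m \<in> W"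
    "\<And>C. compactin T C \<Longrightarrow> finite {n. n \<ge> 1 \<and> (\<exists>m\<ge>1. v n m \<in> C)}"
  using assms unfolding fan_config_def by blast+

text \<open>Both shapes are preserved by continuous proper maps: convergence by continuity, the
  finiteness conditions because preimages of compact sets are compact.\<close>
lemma K_config_proper_image:
  assumes K: "K_config Z a k" and cont: "continuous_map Z T e" and e_proper: "proper_map Z T e"
  shows "K_config T (e a) (\<lambda>n m. e (k n m))"
proof (rule K_configI)
  note Z = K_configD[OF K]
  show "e a \<in> topspace T" "\<And>n m. n \<ge> 1 \<Longrightarrow> m \<ge> 1 \<Longrightarrow> e (k n m) \<in> topspace T"
    using continuous_map_image_subset_topspace[OF cont] Z(1,2) by blast+
  show "\<exists>N. \<forall>n\<ge>N. \<forall>m\<ge>1. e (k n m) \<in> W" if W: "openin T W" "e a \<in> W" for W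
  proof -
    have "openin Z {x \<in> topspace Z. e x \<in> W}"
      using openin_continuous_map_preimage[OF cont W(1)] .
    then obtain N where "\<forall>n\<ge>N. \<forall>m\<ge>1. k n m \<in> {x \<in> topspace Z. e x \<in> W}"
      using Z(1,3) W(2) by blast
    then show ?thesis by blast
  qed
  show "finite {m. m \<ge> 1 \<and> e (k n m) \<in> C}" if "n \<ge> 1" "compactin T C" for n C
    using Z(4)[OF that(1) compactin_proper_map_preimage[OF e_proper that(2)]]
    by (rule rev_finite_subset) (use Z(2) that(1) in auto)
qed

lemma fan_config_proper_image:
  assumes V: "fan_config Z b v" and cont: "continuous_map Z T e" and e_proper: "proper_map Z T e"
  shows "fan_config T (e b) (\<lambda>n m. e (v n m))"
proof (rule fan_configI)
  note Z = fan_configD[OF V]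
  show "e b \<in> topspace T" "\<And>n m. n \<ge> 1 \<Longrightarrow> m \<ge> 1 \<Longrightarrow> e (v n m) \<in> topspace T"
    using continuous_map_image_subset_topspace[OF cont] Z(1,2) by blast+
  show "\<exists>M. \<forall>m\<ge>M. e (v n m) \<in> W" if W: "openin T W" "e b \<in> W" "n \<ge> 1" for W n
  proof -
    have "openin Z {x \<in> topspace Z. e x \<in> W}"
      using openin_continuous_map_preimage[OF cont W(1)] .
    then obtain M where "\<forall>m\<ge>M. v n m \<in> {x \<in> topspace Z. e x \<in> W}"
      using Z(1,3) W(2,3) by blast
    then show ?thesis by blast
  qed
  show "finite {n. n \<ge> 1 \<and> (\<exists>m\<ge>1. e (v n m) \<in> C)}" if "compactin T C" for C
    using Z(4)[OF compactin_proper_map_preimage[OF e_proper that]]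
    by (rule rev_finite_subset) (use Z(2) in auto)
qed

section \<open>The space K\<close>

lemma K_point: "n \<ge> 1 \<Longrightarrow> m \<ge> 1 \<Longrightarrow> (1 / real n, 1 / (real n * real m)) \<in> K_set"
  unfolding K_set_def by blast

text \<open>The columns shrink to the origin: for n \<ge> N all points lie in the ball of radius 2/N.\<close>
lemma K_columns_converge:
  assumes "openin K_space W" and "(0, 0) \<in> W"
  obtains N where "\<And>n m. n \<ge> N \<Longrightarrow> m \<ge> 1 \<Longrightarrow> (1 / real n, 1 / (real n * real m)) \<in> W"
proof -
  obtain Op where Op: "open Op" "W = Op \<inter> K_set"
    using assms(1) by (auto simp: K_space_def openin_subtopology)
  then have "(0, 0) \<in> Op" using assms(2) by blast
  then obtain \<epsilon> where \<epsilon>: "\<epsilon> > 0" "ball (0, 0) \<epsilon> \<subseteq> Op"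
    using Op(1) open_contains_ball by blast
  obtain N :: nat where N: "2 / \<epsilon> < real N" using reals_Archimedean2 by blast
  have "(1 / real n, 1 / (real n * real m)) \<in> W" if nm: "n \<ge> N" "m \<ge> 1" for n m
  proof -
    have "real N \<le> real n" using nm(1) by simp
    then have "2 / \<epsilon> < real n" using N by linarith
    moreover have "0 < 2 / \<epsilon>" using \<epsilon>(1) by simp
    ultimately have "0 < n" by linarith
    with \<open>2 / \<epsilon> < real n\<close> have n: "2 / \<epsilon> < real n" "real n \<ge> 1" "real m \<ge> 1"
      using nm(2) by auto
    have "norm (1 / real n, 1 / (real n * real m)) \<le> norm (1 / real n) + norm (1 / (real n * real m))"
      by (rule norm_Pair_le)
    also have "\<dots> \<le> 2 / real n" using n by (simp add: field_simps)
    also have "\<dots> < \<epsilon>" using n \<epsilon>(1) by (simp add: field_simps)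
    finally have "(1 / real n, 1 / (real n * real m)) \<in> ball (0, 0) \<epsilon>"
      by (simp add: dist_norm norm_Pair)
    then show ?thesis using \<epsilon>(2) Op(2) K_point[of n m] nm n by auto
  qed
  then show ?thesis using that by blast
qed

text \<open>A single column meets a compact set in finitely many points, since the second
  coordinates of a compact subset of K away from the origin are bounded below.\<close>
lemma K_column_finite:
  assumes n: "n \<ge> 1" and C: "compactin K_space C"
  shows "finite {m. m \<ge> 1 \<and> (1 / real n, 1 / (real n * real m)) \<in> C}"
proof -
  have "compact C" "C \<subseteq> K_set" using C by (auto simp: K_space_def compactin_subtopology)
  define Y where "Y = snd ` (C \<inter> {z. fst z = 1 / real n})"
  have "closed {z :: real \<times> real. fst z = 1 / real n}" by (intro closed_Collect_eq continuous_intros)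
  then have "compact Y"
    unfolding Y_def using \<open>compact C\<close> by (intro compact_continuous_image continuous_intros) blast
  moreover have "y > 0" if "y \<in> Y" for y
    using that \<open>C \<subseteq> K_set\<close> n unfolding Y_def K_set_def by auto
  ultimately obtain \<delta> where \<delta>: "\<delta> > 0" "\<And>y. y \<in> Y \<Longrightarrow> \<delta> \<le> y"
    using compact_positive_bounded_below by blast
  have "m \<le> nat \<lceil>1 / \<delta>\<rceil>" if m: "m \<ge> 1" "(1 / real n, 1 / (real n * real m)) \<in> C" for m
  proof -
    have "\<delta> \<le> 1 / (real n * real m)" using \<delta>(2) m unfolding Y_def by force
    also have "\<dots> \<le> 1 / real m" using n m by (simp add: frac_le)
    finally have "real m \<le> 1 / \<delta>" using \<delta>(1) m by (simp add: field_simps)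
    then show ?thesis by linarith
  qed
  then show ?thesis by (intro finite_subset[OF _ finite_atMost[of "nat \<lceil>1 / \<delta>\<rceil>"]]) auto
qed

lemma K_space_config: "K_config K_space (0, 0) (\<lambda>n m. (1 / real n, 1 / (real n * real m)))"
proof (rule K_configI)
  show "(0, 0) \<in> topspace K_space" by (simp add: K_space_def K_set_def)
  show "\<And>n m. n \<ge> 1 \<Longrightarrow> m \<ge> 1 \<Longrightarrow> (1 / real n, 1 / (real n * real m)) \<in> topspace K_space"
    by (simp add: K_space_def K_point)
  show "\<exists>N. \<forall>n\<ge>N. \<forall>m\<ge>1. (1 / real n, 1 / (real n * real m)) \<in> W"
    if W: "openin K_space W" "(0, 0) \<in> W" for W
  proof -
    obtain N where "\<And>n m. n \<ge> N \<Longrightarrow> m \<ge> 1 \<Longrightarrow> (1 / real n, 1 / (real n * real m)) \<in> W"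
      by (rule K_columns_converge[OF W]) blast
    then show ?thesis by blast
  qed
qed (rule K_column_finite)

section \<open>The Fr\'echet--Urysohn fan\<close>

text \<open>Each 1/m is an isolated point of S0: it is the only point of S0 above 1/(m+1) that
  avoids the finitely many larger points 1/k, k < m.\<close>
lemma S0_isolated:
  assumes m: "m \<ge> 1"
  shows "openin (subtopology euclideanreal S0) {1 / real m}"
proof -
  define U where "U = {x. 1 / (real m + 1) < x} - (\<lambda>k. 1 / real k) ` {1..<m}"
  have "open U" unfolding U_def by (intro open_Diff open_greaterThan[unfolded greaterThan_def] finite_imp_closed) auto
  moreover have "{1 / real m} = U \<inter> S0"
  proof
    have "1 / (real m + 1) < 1 / real m" using m by (simp add: frac_less2)
    moreover have "1 / real m \<notin> (\<lambda>k. 1 / real k) ` {1..<m}" by auto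
    moreover have "1 / real m \<in> S0" using m unfolding S0_def by blast
    ultimately show "{1 / real m} \<subseteq> U \<inter> S0"
      unfolding U_def by (simp only: Diff_iff mem_Collect_eq Int_iff insert_subset empty_subsetI simp_thms)
    show "U \<inter> S0 \<subseteq> {1 / real m}"
    proof
      fix x assume x: "x \<in> U \<inter> S0"
      have "1 / (real m + 1) < x" using x unfolding U_def by (simp only: Diff_iff mem_Collect_eq Int_iff)
      moreover have "0 < 1 / (real m + 1)" by simp
      ultimately have "x \<noteq> 0" by linarith
      then obtain k where k: "k \<ge> 1" "x = 1 / real k"
        using x unfolding S0_def by blast
      with \<open>1 / (real m + 1) < x\<close> have "1 / (real m + 1) < 1 / real k" by simp
      then have "real k < real m + 1" using k(1) by (simp add: field_simps)
      then have "k \<le> m" by linarith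
      moreover have "k \<notin> {1..<m}" using x k(2) unfolding U_def by blast
      ultimately have "k = m" using k(1) by simp
      then show "x \<in> {1 / real m}" using k(2) by simp
    qed
  qed
  ultimately show ?thesis unfolding openin_subtopology by (intro exI[of _ U]) simp
qed

lemma topspace_fan_base: "topspace fan_base = {n. n \<ge> 1} \<times> S0"
  by (simp add: fan_base_def)

lemma topspace_fan_V: "topspace fan_V = fan_collapse ` topspace fan_base"
proof
  show "topspace fan_V \<subseteq> fan_collapse ` topspace fan_base"
    using openin_topspace[of fan_V] unfolding fan_V_def openin_quotient_topology by blast
  have "{x \<in> topspace fan_base. fan_collapse x \<in> fan_collapse ` topspace fan_base} = topspace fan_base"
    by auto
  then have "openin fan_V (fan_collapse ` topspace fan_base)"
    unfolding fan_V_def openin_quotient_topology by simp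
  then show "fan_collapse ` topspace fan_base \<subseteq> topspace fan_V" by (rule openin_subset)
qed

lemma fan_point: "n \<ge> 1 \<Longrightarrow> m \<ge> 1 \<Longrightarrow> (n, 1 / real m) \<in> topspace fan_V"
  unfolding topspace_fan_V topspace_fan_base S0_def
  by (rule image_eqI[of _ _ "(n, 1 / real m)"]) (auto simp: fan_collapse_def)

lemma fan_vertex: "(0, 0) \<in> topspace fan_V"
  unfolding topspace_fan_V topspace_fan_base S0_def
  by (rule image_eqI[of _ _ "(1, 0)"]) (auto simp: fan_collapse_def)

lemma fan_point_open:
  assumes n: "n \<ge> 1" and m: "m \<ge> 1"
  shows "openin fan_V {(n, 1 / real m)}"
proof -
  have pt: "(n, 1 / real m) \<in> topspace fan_base" using n m unfolding topspace_fan_base S0_def by auto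
  have "{x \<in> topspace fan_base. fan_collapse x \<in> {(n, 1 / real m)}} = {n} \<times> {1 / real m}"
    using m pt unfolding topspace_fan_base by (auto simp: fan_collapse_def split: if_splits)
  moreover have "openin fan_base ({n} \<times> {1 / real m})"
    unfolding fan_base_def openin_prod_Times_iff using n S0_isolated[OF m] by simp
  ultimately show ?thesis
    unfolding fan_V_def openin_quotient_topology using pt m
    by (auto simp: fan_collapse_def intro!: image_eqI[of _ _ "(n, 1 / real m)"])
qed

text \<open>A set of fan points avoiding the vertex and meeting every spine in a finite set is closed:
  its preimage in N x S0 is closed spine by spine, and N is discrete.\<close>
lemma fan_closedin:
  assumes F: "F \<subseteq> topspace fan_V" and F0: "(0, 0) \<notin> F"
    and fin: "\<And>n. finite {y. (n, y) \<in> F}"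
  shows "closedin fan_V F"
proof -
  have F_base: "x \<in> topspace fan_base \<and> snd x \<noteq> 0" if x: "x \<in> F" for x
  proof -
    obtain z where z: "z \<in> topspace fan_base" "x = fan_collapse z"
      using F x unfolding topspace_fan_V by blast
    then show ?thesis using F0 x by (cases "snd z = 0") (auto simp: fan_collapse_def)
  qed
  have "openin fan_base (topspace fan_base - F)"
    unfolding fan_base_def openin_prod_topology_alt
  proof (intro allI impI)
    fix n s assume ns: "(n, s) \<in> topspace (prod_topology (discrete_topology {n. n \<ge> 1})
                                              (subtopology euclideanreal S0)) - F"
    define G where "G = {y. (n, y) \<in> F}"
    have "closed G" using fin[of n] unfolding G_def by (rule finite_imp_closed)
    then have "openin (subtopology euclideanreal S0) (S0 \<inter> - G)"
      by (intro openin_subtopology_Int2) (simp add: open_Compl)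
    then have "openin (subtopology euclideanreal S0) (S0 - G)" by (simp add: Diff_eq)
    moreover have "{n} \<times> (S0 - G) \<subseteq> topspace fan_base - F"
      using ns by (auto simp: G_def topspace_fan_base fan_base_def)
    ultimately show "\<exists>U V. openin (discrete_topology {n. n \<ge> 1}) U \<and>
        openin (subtopology euclideanreal S0) V \<and> n \<in> U \<and> s \<in> V \<and>
        U \<times> V \<subseteq> topspace (prod_topology (discrete_topology {n. n \<ge> 1})
                                         (subtopology euclideanreal S0)) - F"
      using ns unfolding fan_base_def by (intro exI[of _ "{n}"] exI[of _ "S0 - G"]) (auto simp: G_def)
  qed
  moreover have "{x \<in> topspace fan_base. fan_collapse x \<in> topspace fan_V - F} = topspace fan_base - F"
  proof (rule equalityI; rule subsetI)
    fix x assume "x \<in> {x \<in> topspace fan_base. fan_collapse x \<in> topspace fan_V - F}"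
    then show "x \<in> topspace fan_base - F"
      using F_base[of x] by (cases "snd x = 0") (auto simp: fan_collapse_def)
  next
    fix x assume x: "x \<in> topspace fan_base - F"
    then have "fan_collapse x \<in> topspace fan_V" unfolding topspace_fan_V by blast
    moreover have "fan_collapse x \<notin> F"
      using x F0 by (cases "snd x = 0") (auto simp: fan_collapse_def)
    ultimately show "x \<in> {x \<in> topspace fan_base. fan_collapse x \<in> topspace fan_V - F}"
      using x by blast
  qed
  ultimately have "openin fan_V (topspace fan_V - F)"
    unfolding fan_V_def openin_quotient_topology using topspace_fan_V[unfolded fan_V_def] by simp
  then show ?thesis using F closedin_def by blast
qed

lemma fan_spine_converges:
  assumes W: "openin fan_V W" "(0, 0) \<in> W" and n: "n \<ge> 1"
  obtains M where "\<And>m. m \<ge> M \<Longrightarrow> (n, 1 / real m) \<in> W"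
proof -
  have "openin fan_base {x \<in> topspace fan_base. fan_collapse x \<in> W}"
    using W(1) unfolding fan_V_def openin_quotient_topology by blast
  moreover have "(n, 0) \<in> {x \<in> topspace fan_base. fan_collapse x \<in> W}"
    using n W(2) by (simp add: topspace_fan_base S0_def fan_collapse_def)
  ultimately obtain U V where UV: "openin (subtopology euclideanreal S0) V" "n \<in> U" "0 \<in> V"
      "U \<times> V \<subseteq> {x \<in> topspace fan_base. fan_collapse x \<in> W}"
    unfolding fan_base_def openin_prod_topology_alt by meson
  obtain Op where Op: "open Op" "V = Op \<inter> S0" using UV(1) by (auto simp: openin_subtopology)
  then obtain \<epsilon> where \<epsilon>: "\<epsilon> > 0" "ball 0 \<epsilon> \<subseteq> Op"
    using UV(3) open_contains_ball by blast
  obtain M :: nat where M: "1 / \<epsilon> < real M" using reals_Archimedean2 by blast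
  have "(n, 1 / real m) \<in> W" if m: "m \<ge> M" for m
  proof -
    have "real M \<le> real m" using m by simp
    then have "1 / \<epsilon> < real m" using M by linarith
    moreover have "0 < 1 / \<epsilon>" using \<epsilon>(1) by simp
    ultimately have "0 < real m" by linarith
    with \<open>1 / \<epsilon> < real m\<close> have m1: "0 < m" "1 / real m < \<epsilon>"
      using \<epsilon>(1) by (auto simp: field_simps)
    then have "1 / real m \<in> V" using \<epsilon>(2) Op(2) unfolding S0_def by (auto simp: dist_real_def)
    then have "fan_collapse (n, 1 / real m) \<in> W" using UV(2,4) by blast
    then show ?thesis using m1 by (simp add: fan_collapse_def)
  qed
  then show ?thesis using that by blast
qed

text \<open>A compact subset of the fan meets only finitely many spines: choosing one point on each
  spine met gives a closed discrete, hence finite, subset.\<close>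
lemma fan_compact_meets_finitely_many_spines:
  assumes C: "compactin fan_V C"
  shows "finite {n. n \<ge> 1 \<and> (\<exists>m\<ge>1. (n, 1 / real m) \<in> C)}" (is "finite ?N")
proof -
  have "\<forall>n\<in>?N. \<exists>m. m \<ge> 1 \<and> (n, 1 / real m) \<in> C" by blast
  then obtain g where "\<forall>n\<in>?N. g n \<ge> 1 \<and> (n, 1 / real (g n)) \<in> C"
    by (rule bchoice[elim_format]) blast
  then have g: "\<And>n. n \<in> ?N \<Longrightarrow> g n \<ge> 1 \<and> (n, 1 / real (g n)) \<in> C" by blast
  define F where "F = (\<lambda>n. (n, 1 / real (g n))) ` ?N"
  have "closedin fan_V F"
  proof (rule fan_closedin)
    show "F \<subseteq> topspace fan_V" unfolding F_def using g fan_point by auto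
    show "(0, 0) \<notin> F" unfolding F_def using g by auto
    show "finite {y. (n, y) \<in> F}" for n
      by (rule finite_subset[of _ "{1 / real (g n)}"]) (auto simp: F_def)
  qed
  moreover have "F \<subseteq> C" unfolding F_def using g by auto
  ultimately have "compactin fan_V F" using closed_compactin C by blast
  moreover have "openin fan_V {x}" if "x \<in> F" for x
  proof -
    obtain n where "n \<in> ?N" "x = (n, 1 / real (g n))" using \<open>x \<in> F\<close> unfolding F_def by blast
    then show ?thesis using g fan_point_open by auto
  qed
  ultimately have "finite F" by (rule finite_compactin_isolated)
  moreover have "inj_on (\<lambda>n. (n, 1 / real (g n))) ?N" by (simp add: inj_on_def)
  ultimately show ?thesis unfolding F_def using finite_image_iff by blast
qed

lemma fan_V_config: "fan_config fan_V (0, 0) (\<lambda>n m. (n, 1 / real m))"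
proof (rule fan_configI)
  show "\<exists>M. \<forall>m\<ge>M. (n, 1 / real m) \<in> W" if W: "openin fan_V W" "(0, 0) \<in> W" "n \<ge> 1" for W n
  proof -
    obtain M where "\<And>m. m \<ge> M \<Longrightarrow> (n, 1 / real m) \<in> W"
      by (rule fan_spine_converges[OF W]) blast
    then show ?thesis by blast
  qed
qed (use fan_vertex fan_point fan_compact_meets_finitely_many_spines in auto)

section \<open>Cancellative operations on closed sets\<close>

locale cancellative_subset =
  fixes T :: "'g topology" and A :: "'g set" and mu :: "'g \<Rightarrow> 'g \<Rightarrow> 'g"
    and L R :: "'g \<times> 'g \<Rightarrow> 'g"
  assumes A_topspace: "A \<subseteq> topspace T"
    and mu_cont: "continuous_map (prod_topology T T) T (\<lambda>p. mu (fst p) (snd p))"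
    and mu_closed: "\<And>x y. x \<in> A \<Longrightarrow> y \<in> A \<Longrightarrow> mu x y \<in> A"
    and L_cont: "continuous_map (prod_topology T T) T L"
    and R_cont: "continuous_map (prod_topology T T) T R"
    and L_cancel: "\<And>x y. x \<in> A \<Longrightarrow> y \<in> A \<Longrightarrow> L (mu x y, y) = x"
    and R_cancel: "\<And>x y. x \<in> A \<Longrightarrow> y \<in> A \<Longrightarrow> R (x, mu x y) = y"
begin

context
  fixes a b :: 'g and k v :: "nat \<Rightarrow> nat \<Rightarrow> 'g"
  assumes K: "K_config T a k" and V: "fan_config T b v"
    and a_A: "a \<in> A" and b_A: "b \<in> A"
    and k_A: "\<And>n m. n \<ge> 1 \<Longrightarrow> m \<ge> 1 \<Longrightarrow> k n m \<in> A"
    and v_A: "\<And>n m. n \<ge> 1 \<Longrightarrow> m \<ge> 1 \<Longrightarrow> v n m \<in> A"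
begin

lemmas K_facts = K_configD[OF K] and V_facts = fan_configD[OF V]

text \<open>A compact set C contains only finitely many products from a fixed column n: otherwise the
  compact set L (C x (spine n plus vertex)) would contain infinitely many points of column n of K.\<close>
lemma products_in_column_finite:
  assumes n: "n \<ge> 1" and C: "compactin T C"
  shows "finite {m. m \<ge> 1 \<and> mu (k n m) (v n m) \<in> C}"
proof -
  define Q where "Q = insert b {v n m | m. m \<ge> 1}"
  have "compactin T Q" unfolding Q_def
  proof (rule compactin_insert_limit)
    show "b \<in> topspace T" "{v n m | m. m \<ge> 1} \<subseteq> topspace T"
      using V_facts(1,2) n by auto
    fix W assume "openin T W" "b \<in> W"
    then obtain M where M: "\<forall>m\<ge>M. v n m \<in> W" using V_facts(3) n by blast
    have "{v n m | m. m \<ge> 1} - W \<subseteq> v n ` {..<M}"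
    proof
      fix x assume "x \<in> {v n m | m. m \<ge> 1} - W"
      then obtain m where m: "x = v n m" "v n m \<notin> W" by blast
      have "\<not> M \<le> m" using M m(2) by blast
      then show "x \<in> v n ` {..<M}" using m(1) by simp
    qed
    then show "finite ({v n m | m. m \<ge> 1} - W)" using finite_subset by blast
  qed
  then have "compactin T (L ` (C \<times> Q))"
    using C L_cont by (intro image_compactin) (simp_all add: compactin_Times)
  then have fin: "finite {m. m \<ge> 1 \<and> k n m \<in> L ` (C \<times> Q)}"
    using K_facts(4) n by blast
  have column: "k n m \<in> L ` (C \<times> Q)" if m: "m \<ge> 1" "mu (k n m) (v n m) \<in> C" for m
  proof (rule image_eqI)
    show "k n m = L (mu (k n m) (v n m), v n m)" using L_cancel k_A v_A n m(1) by simp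
    show "(mu (k n m) (v n m), v n m) \<in> C \<times> Q" using m unfolding Q_def by blast
  qed
  have "{m. m \<ge> 1 \<and> mu (k n m) (v n m) \<in> C} \<subseteq> {m. m \<ge> 1 \<and> k n m \<in> L ` (C \<times> Q)}"
    using column by blast
  then show ?thesis using fin by (rule finite_subset)
qed

text \<open>A compact set C contains products from only finitely many columns: choosing one
  product per column, R (({a} plus the chosen points of K) x C) would meet infinitely many spines of the fan.\<close>
lemma products_in_finitely_many_columns:
  assumes C: "compactin T C"
  shows "finite {n. n \<ge> 1 \<and> (\<exists>m\<ge>1. mu (k n m) (v n m) \<in> C)}" (is "finite ?N")
proof -
  have "\<forall>n\<in>?N. \<exists>m. m \<ge> 1 \<and> mu (k n m) (v n m) \<in> C" by blast
  then obtain g where "\<forall>n\<in>?N. g n \<ge> 1 \<and> mu (k n (g n)) (v n (g n)) \<in> C"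
    by (rule bchoice[elim_format]) blast
  then have g: "\<And>n. n \<in> ?N \<Longrightarrow> g n \<ge> 1 \<and> mu (k n (g n)) (v n (g n)) \<in> C" by blast
  define Q where "Q = insert a ((\<lambda>n. k n (g n)) ` ?N)"
  have "compactin T Q" unfolding Q_def
  proof (rule compactin_insert_limit)
    show "a \<in> topspace T" by (rule K_facts(1))
    show "(\<lambda>n. k n (g n)) ` ?N \<subseteq> topspace T" using K_facts(2) g by blast
    fix W assume "openin T W" "a \<in> W"
    then obtain N where N: "\<forall>n\<ge>N. \<forall>m\<ge>1. k n m \<in> W" using K_facts(3) by blast
    have "(\<lambda>n. k n (g n)) ` ?N - W \<subseteq> (\<lambda>n. k n (g n)) ` {..<N}"
    proof
      fix x assume "x \<in> (\<lambda>n. k n (g n)) ` ?N - W"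
      then obtain n where n: "n \<in> ?N" "x = k n (g n)" "k n (g n) \<notin> W" by blast
      have "\<not> N \<le> n" using N g[OF n(1)] n(3) by blast
      then show "x \<in> (\<lambda>n. k n (g n)) ` {..<N}" using n(2) by simp
    qed
    then show "finite ((\<lambda>n. k n (g n)) ` ?N - W)" using finite_subset by blast
  qed
  then have "compactin T (R ` (Q \<times> C))"
    using C R_cont by (intro image_compactin) (simp_all add: compactin_Times)
  then have fin: "finite {n. n \<ge> 1 \<and> (\<exists>m\<ge>1. v n m \<in> R ` (Q \<times> C))}"
    using V_facts(4) by blast
  have spine: "v n (g n) \<in> R ` (Q \<times> C)" if n: "n \<in> ?N" for n
  proof (rule image_eqI)
    show "v n (g n) = R (k n (g n), mu (k n (g n)) (v n (g n)))"
      using R_cancel k_A v_A g[OF n] n by simp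
    show "(k n (g n), mu (k n (g n)) (v n (g n))) \<in> Q \<times> C"
      using g[OF n] n unfolding Q_def by blast
  qed
  have "?N \<subseteq> {n. n \<ge> 1 \<and> (\<exists>m\<ge>1. v n m \<in> R ` (Q \<times> C))}"
  proof
    fix n assume n: "n \<in> ?N"
    then show "n \<in> {n. n \<ge> 1 \<and> (\<exists>m\<ge>1. v n m \<in> R ` (Q \<times> C))}"
      using g[OF n] spine[OF n] by blast
  qed
  then show ?thesis using fin by (rule finite_subset)
qed

lemma products_in_compact_finite:
  assumes C: "compactin T C"
  shows "finite {(n, m). n \<ge> 1 \<and> m \<ge> 1 \<and> mu (k n m) (v n m) \<in> C}"
proof (rule finite_subset)
  show "{(n, m). n \<ge> 1 \<and> m \<ge> 1 \<and> mu (k n m) (v n m) \<in> C} \<subseteq>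
        Sigma {n. n \<ge> 1 \<and> (\<exists>m\<ge>1. mu (k n m) (v n m) \<in> C)}
              (\<lambda>n. {m. m \<ge> 1 \<and> mu (k n m) (v n m) \<in> C})" by blast
  show "finite (Sigma {n. n \<ge> 1 \<and> (\<exists>m\<ge>1. mu (k n m) (v n m) \<in> C)}
              (\<lambda>n. {m. m \<ge> 1 \<and> mu (k n m) (v n m) \<in> C}))"
    by (intro finite_SigmaI products_in_finitely_many_columns[OF C] products_in_column_finite[OF _ C]) simp
qed

text \<open>On the other hand, by continuity of mu at (a, b), some column has a tail in any
  given neighbourhood of mu a b: pick a column n0 of K close to a, then a tail of spine n0 close to b.\<close>
lemma products_column_tail_near:
  assumes W: "openin T W" "mu a b \<in> W"
  obtains n0 M where "n0 \<ge> 1" "\<And>m. m \<ge> M \<Longrightarrow> mu (k n0 m) (v n0 m) \<in> W"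
proof -
  have "openin (prod_topology T T) {p \<in> topspace (prod_topology T T). mu (fst p) (snd p) \<in> W}"
    using mu_cont W(1) by (rule openin_continuous_map_preimage)
  moreover have "(a, b) \<in> {p \<in> topspace (prod_topology T T). mu (fst p) (snd p) \<in> W}"
    using a_A b_A A_topspace W(2) by auto
  ultimately obtain U U' where UU: "openin T U" "openin T U'" "a \<in> U" "b \<in> U'"
      "U \<times> U' \<subseteq> {p \<in> topspace (prod_topology T T). mu (fst p) (snd p) \<in> W}"
    unfolding openin_prod_topology_alt by meson
  obtain N where N: "\<forall>n\<ge>N. \<forall>m\<ge>1. k n m \<in> U" using K_facts(3) UU(1,3) by blast
  define n0 where "n0 = max N 1"
  have n0: "n0 \<ge> 1" "n0 \<ge> N" unfolding n0_def by auto
  obtain M where M: "\<forall>m\<ge>M. v n0 m \<in> U'" using V_facts(3) UU(2,4) n0(1) by blast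
  have "mu (k n0 m) (v n0 m) \<in> W" if m: "m \<ge> max M 1" for m
  proof -
    have "(k n0 m, v n0 m) \<in> U \<times> U'" using N M n0 m by auto
    then have "(k n0 m, v n0 m) \<in> {p \<in> topspace (prod_topology T T). mu (fst p) (snd p) \<in> W}"
      by (rule subsetD[OF UU(5)])
    then show ?thesis by simp
  qed
  then show ?thesis using that n0(1) by blast
qed

lemma products_minus_point_closedin:
  assumes kA: "k_space (subtopology T A)" and t1A: "t1_space (subtopology T A)"
  shows "closedin (subtopology T A) ({mu (k n m) (v n m) | n m. n \<ge> 1 \<and> m \<ge> 1} - {c})"
    (is "closedin _ (?P - {c})")
proof (rule closedin_if_finite_on_compacts[OF kA t1A])
  have "?P \<subseteq> A" using k_A v_A mu_closed by blast
  then show "?P - {c} \<subseteq> topspace (subtopology T A)" using A_topspace by auto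
  fix C assume "compactin (subtopology T A) C"
  then have "compactin T C" by (simp add: compactin_subtopology)
  then have "finite ((\<lambda>(n, m). mu (k n m) (v n m)) ` {(n, m). n \<ge> 1 \<and> m \<ge> 1 \<and> mu (k n m) (v n m) \<in> C})"
    using products_in_compact_finite by blast
  moreover have "C \<inter> (?P - {c}) \<subseteq> (\<lambda>(n, m). mu (k n m) (v n m)) ` {(n, m). n \<ge> 1 \<and> m \<ge> 1 \<and> mu (k n m) (v n m) \<in> C}"
  proof
    fix x assume "x \<in> C \<inter> (?P - {c})"
    then obtain n m where "n \<ge> 1" "m \<ge> 1" "x = mu (k n m) (v n m)" "x \<in> C" by blast
    then show "x \<in> (\<lambda>(n, m). mu (k n m) (v n m)) ` {(n, m). n \<ge> 1 \<and> m \<ge> 1 \<and> mu (k n m) (v n m) \<in> C}"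
      by (intro image_eqI[of _ _ "(n, m)"]) auto
  qed
  ultimately show "finite (C \<inter> (?P - {c}))" using finite_subset by blast
qed

text \<open>The main contradiction: if A is a T1 k-space, the complement in A of the products other
  than mu a b is a neighbourhood of mu a b, so it contains a column tail of products; thus
  infinitely many products equal mu a b, contradicting finiteness on the compact set {mu a b}.\<close>
theorem no_K_and_fan_configs:
  assumes kA: "k_space (subtopology T A)" and t1A: "t1_space (subtopology T A)"
  shows False
proof -
  define P where "P = {mu (k n m) (v n m) | n m. n \<ge> 1 \<and> m \<ge> 1}"
  define c where "c = mu a b"
  have "closedin (subtopology T A) (P - {c})"
    unfolding P_def by (rule products_minus_point_closedin[OF kA t1A])
  then have "openin (subtopology T A) (A - (P - {c}))"
    using A_topspace by (metis closedin_def topspace_subtopology_subset)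
  then obtain W where W: "openin T W" "A - (P - {c}) = W \<inter> A" by (auto simp: openin_subtopology)
  have "c \<in> W" using W(2) a_A b_A mu_closed unfolding c_def by blast
  then obtain n0 M where n0: "n0 \<ge> 1" and tail: "\<And>m. m \<ge> M \<Longrightarrow> mu (k n0 m) (v n0 m) \<in> W"
    using products_column_tail_near[OF W(1)] unfolding c_def by blast
  have "Pair n0 ` {max M 1..} \<subseteq> {(n, m). n \<ge> 1 \<and> m \<ge> 1 \<and> mu (k n m) (v n m) \<in> {c}}"
  proof (rule image_subsetI)
    fix m assume "m \<in> {max M 1..}"
    then have m: "m \<ge> M" "m \<ge> 1" by auto
    then have "mu (k n0 m) (v n0 m) \<in> W \<inter> A" using tail k_A v_A mu_closed n0 by blast
    moreover have "mu (k n0 m) (v n0 m) \<in> P" using m n0 unfolding P_def by blast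
    ultimately have "mu (k n0 m) (v n0 m) = c" using W(2) by blast
    then show "(n0, m) \<in> {(n, m). n \<ge> 1 \<and> m \<ge> 1 \<and> mu (k n m) (v n m) \<in> {c}}"
      using m n0 by simp
  qed
  moreover have "infinite (Pair n0 ` {max M 1..})"
    by (simp add: finite_image_iff inj_on_def infinite_Ici)
  moreover have "compactin T {c}" using a_A b_A mu_closed A_topspace unfolding c_def by auto
  ultimately show False using products_in_compact_finite finite_subset by blast
qed

end

theorem no_closed_copy:
  fixes X :: "'a topology"
  assumes clA: "closedin T A" and hX: "X homeomorphic_space subtopology T A"
    and t1X: "t1_space X" and kX: "k_space X"
    and CK: "\<exists>C. closedin X C \<and> subtopology X C homeomorphic_space K_space"
    and CV: "\<exists>C. closedin X C \<and> subtopology X C homeomorphic_space fan_V"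
  shows False
proof -
  obtain CK' where "closedin X CK'" "subtopology X CK' homeomorphic_space K_space"
    using CK by blast
  then obtain eK where eK: "proper_map K_space T eK" "continuous_map K_space T eK"
      "eK ` topspace K_space \<subseteq> A"
    using closed_subspace_proper_embedding[OF clA hX] by blast
  obtain CV' where "closedin X CV'" "subtopology X CV' homeomorphic_space fan_V"
    using CV by blast
  then obtain eV where eV: "proper_map fan_V T eV" "continuous_map fan_V T eV"
      "eV ` topspace fan_V \<subseteq> A"
    using closed_subspace_proper_embedding[OF clA hX] by blast
  have K0: "(0, 0) \<in> topspace K_space"
    and Kp: "\<And>n m. n \<ge> 1 \<Longrightarrow> m \<ge> 1 \<Longrightarrow> (1 / real n, 1 / (real n * real m)) \<in> topspace K_space"
    by (fact K_configD[OF K_space_config])+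
  have V0: "(0, 0) \<in> topspace fan_V"
    and Vp: "\<And>n m. n \<ge> 1 \<Longrightarrow> m \<ge> 1 \<Longrightarrow> (n, 1 / real m) \<in> topspace fan_V"
    by (fact fan_configD[OF fan_V_config])+
  show False
  proof (rule no_K_and_fan_configs)
    show "K_config T (eK (0, 0)) (\<lambda>n m. eK (1 / real n, 1 / (real n * real m)))"
      using K_config_proper_image[OF K_space_config eK(2,1)] .
    show "fan_config T (eV (0, 0)) (\<lambda>n m. eV (n, 1 / real m))"
      using fan_config_proper_image[OF fan_V_config eV(2,1)] .
    show "eK (0, 0) \<in> A" using eK(3) K0 by blast
    show "eV (0, 0) \<in> A" using eV(3) V0 by blast
    show "\<And>n m. n \<ge> 1 \<Longrightarrow> m \<ge> 1 \<Longrightarrow> eK (1 / real n, 1 / (real n * real m)) \<in> A"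
      using eK(3) Kp by blast
    show "\<And>n m. n \<ge> 1 \<Longrightarrow> m \<ge> 1 \<Longrightarrow> eV (n, 1 / real m) \<in> A"
      using eV(3) Vp by blast
    show "k_space (subtopology T A)" using homeomorphic_k_space[OF hX] kX by simp
    show "t1_space (subtopology T A)" using homeomorphic_t1_space[OF hX] t1X by simp
  qed
qed

end

section \<open>Groups and convex sets\<close>

lemma topological_group_cancellative:
  assumes TG: "topological_group G T" and A: "multiplicative G A"
  shows "cancellative_subset T A (\<lambda>x y. x \<otimes>\<^bsub>G\<^esub> y)
           (\<lambda>q. fst q \<otimes>\<^bsub>G\<^esub> inv\<^bsub>G\<^esub> (snd q)) (\<lambda>q. inv\<^bsub>G\<^esub> (fst q) \<otimes>\<^bsub>G\<^esub> snd q)"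
proof
  have G: "group G" and top: "topspace T = carrier G"
    and mult: "continuous_map (prod_topology T T) T (\<lambda>p. fst p \<otimes>\<^bsub>G\<^esub> snd p)"
    and inv: "continuous_map T T (\<lambda>x. inv\<^bsub>G\<^esub> x)"
    using TG unfolding topological_group_def by auto
  have AG: "A \<subseteq> carrier G" and closed: "\<And>x y. x \<in> A \<Longrightarrow> y \<in> A \<Longrightarrow> x \<otimes>\<^bsub>G\<^esub> y \<in> A"
    using A unfolding multiplicative_def by blast+
  show "A \<subseteq> topspace T" using AG top by simp
  show "continuous_map (prod_topology T T) T (\<lambda>p. fst p \<otimes>\<^bsub>G\<^esub> snd p)" by (rule mult)
  show "\<And>x y. x \<in> A \<Longrightarrow> y \<in> A \<Longrightarrow> x \<otimes>\<^bsub>G\<^esub> y \<in> A" by (rule closed)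
  show "continuous_map (prod_topology T T) T (\<lambda>q. fst q \<otimes>\<^bsub>G\<^esub> inv\<^bsub>G\<^esub> (snd q))"
    using continuous_map_compose[OF continuous_map_pairedI[OF continuous_map_fst
          continuous_map_compose[OF continuous_map_snd inv]] mult] by (simp add: o_def)
  show "continuous_map (prod_topology T T) T (\<lambda>q. inv\<^bsub>G\<^esub> (fst q) \<otimes>\<^bsub>G\<^esub> snd q)"
    using continuous_map_compose[OF continuous_map_pairedI[OF
          continuous_map_compose[OF continuous_map_fst inv] continuous_map_snd] mult]
    by (simp add: o_def)
  fix x y assume "x \<in> A" "y \<in> A"
  then have xy: "x \<in> carrier G" "y \<in> carrier G" "x \<otimes>\<^bsub>G\<^esub> y \<in> carrier G"
    using AG closed by auto
  show "fst (x \<otimes>\<^bsub>G\<^esub> y, y) \<otimes>\<^bsub>G\<^esub> inv\<^bsub>G\<^esub> (snd (x \<otimes>\<^bsub>G\<^esub> y, y)) = x"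
    using xy by (simp add: group.inv_solve_right'[OF G])
  show "inv\<^bsub>G\<^esub> (fst (x, x \<otimes>\<^bsub>G\<^esub> y)) \<otimes>\<^bsub>G\<^esub> snd (x, x \<otimes>\<^bsub>G\<^esub> y) = y"
    using xy by (simp add: group.inv_solve_left'[OF G])
qed

lemma linear_combination_continuous:
  fixes T :: "'v::real_vector topology"
  assumes "linear_topological_space T"
  shows "continuous_map (prod_topology T T) T (\<lambda>q. s *\<^sub>R fst q + t *\<^sub>R snd q)"
proof -
  have add: "continuous_map (prod_topology T T) T (\<lambda>p. fst p + snd p)"
    and scale: "continuous_map (prod_topology euclideanreal T) T (\<lambda>p. fst p *\<^sub>R snd p)"
    using assms unfolding linear_topological_space_def by auto
  have scale_map: "continuous_map (prod_topology T T) T (\<lambda>q. c *\<^sub>R f q)"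
    if "continuous_map (prod_topology T T) T f" for c f
    using continuous_map_compose[OF continuous_map_pairedI[OF continuous_map_const[THEN iffD2] that] scale]
    by (simp add: o_def)
  have add_map: "continuous_map (prod_topology T T) T (\<lambda>q. f q + g q)"
    if "continuous_map (prod_topology T T) T f" "continuous_map (prod_topology T T) T g" for f g
    using continuous_map_compose[OF continuous_map_pairedI[OF that] add] by (simp add: o_def)
  show ?thesis by (intro add_map scale_map continuous_map_fst continuous_map_snd)
qed

lemma convex_cancellative:
  fixes T :: "'v::real_vector topology"
  assumes lt: "linear_topological_space T" and A: "convex A"
  shows "cancellative_subset T A (\<lambda>x y. (1/2) *\<^sub>R x + (1/2) *\<^sub>R y)
           (\<lambda>q. 2 *\<^sub>R fst q + (-1) *\<^sub>R snd q) (\<lambda>q. (-1) *\<^sub>R fst q + 2 *\<^sub>R snd q)"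
proof
  show "A \<subseteq> topspace T" using lt unfolding linear_topological_space_def by simp
  show "\<And>x y. x \<in> A \<Longrightarrow> y \<in> A \<Longrightarrow> (1/2) *\<^sub>R x + (1/2) *\<^sub>R y \<in> A"
    using A by (intro convexD) auto
  show "continuous_map (prod_topology T T) T (\<lambda>p. (1/2) *\<^sub>R fst p + (1/2) *\<^sub>R snd p)"
    "continuous_map (prod_topology T T) T (\<lambda>q. 2 *\<^sub>R fst q + (-1) *\<^sub>R snd q)"
    "continuous_map (prod_topology T T) T (\<lambda>q. (-1) *\<^sub>R fst q + 2 *\<^sub>R snd q)"
    by (rule linear_combination_continuous[OF lt])+
qed (simp_all add: scaleR_add_right)

theorem theorem1:
  fixes X :: "'a topology"
  assumes "normal_space X" and "t1_space X" and "k_space X"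
    and "\<exists>C. closedin X C \<and> subtopology X C homeomorphic_space K_space"
    and "\<exists>C. closedin X C \<and> subtopology X C homeomorphic_space fan_V"
  shows "(\<forall>(G :: ('g, 'm) monoid_scheme) (T :: 'g topology). topological_group G T \<longrightarrow>
            \<not> (\<exists>A. closedin T A \<and> multiplicative G A \<and> X homeomorphic_space subtopology T A))
       \<and> (\<forall>T :: 'v::real_vector topology. linear_topological_space T \<longrightarrow>
            \<not> (\<exists>A. closedin T A \<and> convex A \<and> X homeomorphic_space subtopology T A))"
proof (intro conjI allI impI notI; elim exE conjE)
  fix G :: "('g, 'm) monoid_scheme" and T :: "'g topology" and A
  assume "topological_group G T" "multiplicative G A"
    and "closedin T A" "X homeomorphic_space subtopology T A"
  then show False
    using cancellative_subset.no_closed_copy[OF topological_group_cancellative] assms(2-5)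
    by blast
next
  fix T :: "'v topology" and A
  assume "linear_topological_space T" "convex A"
    and "closedin T A" "X homeomorphic_space subtopology T A"
  then show False
    using cancellative_subset.no_closed_copy[OF convex_cancellative] assms(2-5)
    by blast
qed

end
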